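(* Let the system $x^+=f(x,u)$ (as in the context) be flat with flat output $y$ and parameterization $x=F_x(y_{[-R_1,R_2-1]})$, $u=F_u(y_{[-R_1,R_2]})$. Then the submatrices $\partial_{y_{[R_2-1]}}F_x$ (the Jacobian of $F_x$ with respect to the variables $y^j_{[r_{2,j}-1]}$, $j=1,\dots,m$) and $\partial_{y_{[R_2]}}F_u$ (the Jacobian of $F_u$ with respect to the variables $y^j_{[r_{2,j}]}$, $j=1,\dots,m$) have the same (generic) rank.
   Context: Consider a nonlinear time-invariant discrete-time system $x^{i,+}=f^i(x,u)$, $i=1,\dots,n$, with $x\in\mathbb{R}^n$, $u\in\mathbb{R}^m$, smooth $f$, $\operatorname{rank}(\partial_u f)=m$, and $\operatorname{rank}(\partial_{(x,u)}f)=n$. Let $g(x,u)$ be $m$ smooth functions such that $(x,u)\mapsto(f(x,u),g(x,u))$ is a local diffeomorphism, and $\zeta=g(x,u)$. Notation: $w_{[\alpha]}$ is the $\alpha$-th forward shift, $w_{[-\alpha]}$ the $\alpha$-th backward shift; for a multi-index $R=(r_1,\dots,r_m)$ and $y=(y^1,\dots,y^m)$, $y_{[R]}$ denotes $(y^1_{[r_1]},\dots,y^m_{[r_m]})$ and $y_{[-S_1,S_2]}$ denotes all $y^j_{[i]}$ with $-s_{1,j}\le i\le s_{2,j}$. Flatness: the system is flat around an equilibrium if there exist an $m$-tuple $y=\varphi(\zeta_{[-Q_1,-1]},x,u,u_{[1,Q_2]})$ (flat output) and smooth maps $x=F_x(y_{[-R_1,R_2-1]})$, $u=F_u(y_{[-R_1,R_2]})$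 (the uniquely determined parameterization) establishing locally a one-to-one correspondence between system trajectories and arbitrary sequences $y(k)\in\mathbb{R}^m$; in particular the identity $\delta(F_x)=f(F_x,F_u)$ holds, where $\delta$ is the forward shift operator acting on functions of $y$ and its shifts (replacing each $y_{[i]}$ by $y_{[i+1]}$). *)

theory Defs
  imports "HOL-Analysis.Analysis"
begin

fun Ck_on :: "nat \<Rightarrow> ('a::euclidean_space \<Rightarrow> 'b::real_normed_vector) \<Rightarrow> 'a set \<Rightarrow> bool" where
  "Ck_on 0 h U = continuous_on U h"
| "Ck_on (Suc k) h U =
     (\<exists>h'. (\<forall>p\<in>U. (h has_derivative h' p) (at p)) \<and> (\<forall>v. Ck_on k (\<lambda>p. h' p v) U))"

definition smooth_on :: "('a::euclidean_space \<Rightarrow> 'b::real_normed_vector) \<Rightarrow> 'a set \<Rightarrow> bool" where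
  "smooth_on h U \<longleftrightarrow> (\<forall>k. Ck_on k h U)"

definition local_diffeo :: "('a::euclidean_space \<Rightarrow> 'b::euclidean_space) \<Rightarrow> bool" where
  "local_diffeo h \<longleftrightarrow> (\<forall>p. \<exists>S T. open S \<and> p \<in> S \<and> open T \<and> bij_betw h S T \<and>
      smooth_on h S \<and> smooth_on (inv_into S h) T)"

text \<open>The partial Jacobian d_u f corresponds to the restriction of the derivative to
  directions (0,v); ranks of linear maps are dimensions of their ranges.\<close>

definition standing_assumptions ::
  "((real^'n) \<times> (real^'m) \<Rightarrow> real^'n) \<Rightarrow> ((real^'n) \<times> (real^'m) \<Rightarrow> real^'m) \<Rightarrow> bool" where
  "standing_assumptions f g \<longleftrightarrow>
     smooth_on f UNIV \<and>
     (\<forall>p f'. (f has_derivative f') (at p) \<longrightarrow> dim (range (\<lambda>v. f' (0, v))) = CARD('m)) \<and>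
     (\<forall>p f'. (f has_derivative f') (at p) \<longrightarrow> dim (range f') = CARD('n)) \<and>
     smooth_on g UNIV \<and>
     local_diffeo (\<lambda>p. (f p, g p))"

text \<open>A sequence Y :: int => real^'m represents y: y^j_[i] = Y i $ j.\<close>

definition shiftseq :: "int \<Rightarrow> (int \<Rightarrow> 'a) \<Rightarrow> (int \<Rightarrow> 'a)" where
  "shiftseq k Y = (\<lambda>i. Y (i + k))"

definition fwd_shift :: "((int \<Rightarrow> 'a) \<Rightarrow> 'b) \<Rightarrow> ((int \<Rightarrow> 'a) \<Rightarrow> 'b)" where
  "fwd_shift F = (\<lambda>Y. F (shiftseq 1 Y))"

definition seq_upd :: "(int \<Rightarrow> real^'m) \<Rightarrow> int \<Rightarrow> 'm \<Rightarrow> real \<Rightarrow> (int \<Rightarrow> real^'m)" where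
  "seq_upd Y i j t = Y(i := (\<chi> k. if k = j then t else Y i $ k))"

definition seq_partial ::
  "((int \<Rightarrow> real^'m) \<Rightarrow> 'b::real_normed_vector) \<Rightarrow> int \<Rightarrow> 'm \<Rightarrow> (int \<Rightarrow> real^'m) \<Rightarrow> 'b" where
  "seq_partial F i j Y = vector_derivative (\<lambda>t. F (seq_upd Y i j t)) (at (Y i $ j))"

definition depends_only_on :: "((int \<Rightarrow> 'a^'m) \<Rightarrow> 'b) \<Rightarrow> (int \<Rightarrow> 'm \<Rightarrow> bool) \<Rightarrow> bool" where
  "depends_only_on F W \<longleftrightarrow>
     (\<forall>Y Y'. (\<forall>i j. W i j \<longrightarrow> Y i $ j = Y' i $ j) \<longrightarrow> F Y = F Y')"

fun seq_Ck_on :: "nat \<Rightarrow> ((int \<Rightarrow> real^'m) \<Rightarrow> 'b::real_normed_vector) \<Rightarrow> (int \<Rightarrow> real^'m) set \<Rightarrow> bool" where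
  "seq_Ck_on 0 F D = continuous_on D F"
| "seq_Ck_on (Suc k) F D =
     (continuous_on D F \<and>
      (\<forall>Y\<in>D. \<forall>i j. (\<lambda>t. F (seq_upd Y i j t)) differentiable (at (Y i $ j))) \<and>
      (\<forall>i j. seq_Ck_on k (seq_partial F i j) D))"

definition seq_smooth_on :: "((int \<Rightarrow> real^'m) \<Rightarrow> 'b::real_normed_vector) \<Rightarrow> (int \<Rightarrow> real^'m) set \<Rightarrow> bool" where
  "seq_smooth_on F D \<longleftrightarrow> (\<forall>k. seq_Ck_on k F D)"

text \<open>uniform neighbourhood of the constant sequence y0 (shift invariant)\<close>
definition seq_ball :: "'a::metric_space \<Rightarrow> real \<Rightarrow> (int \<Rightarrow> 'a) set" where
  "seq_ball y0 e = {Y. \<forall>i. dist (Y i) y0 < e}"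

definition trajectory ::
  "((real^'n) \<times> (real^'m) \<Rightarrow> real^'n) \<Rightarrow> (int \<Rightarrow> real^'n) \<Rightarrow> (int \<Rightarrow> real^'m) \<Rightarrow> bool" where
  "trajectory f x u \<longleftrightarrow> (\<forall>k. x (k + 1) = f (x k, u k))"

text \<open>flat output along a trajectory at time k:
  y(k) = phi(zeta_[-Q1,-1], x, u, u_[1,Q2]) evaluated at time k, zeta = g(x,u)\<close>
definition flat_output_seq ::
  "((real^'n) \<times> (real^'m) \<Rightarrow> real^'m) \<Rightarrow>
   ((int \<Rightarrow> real^'m) \<Rightarrow> (int \<Rightarrow> real^'n) \<Rightarrow> (int \<Rightarrow> real^'m) \<Rightarrow> real^'m) \<Rightarrow>
   (int \<Rightarrow> real^'n) \<Rightarrow> (int \<Rightarrow> real^'m) \<Rightarrow> (int \<Rightarrow> real^'m)" where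
  "flat_output_seq g \<phi> x u =
     (\<lambda>k. \<phi> (shiftseq k (\<lambda>i. g (x i, u i))) (shiftseq k x) (shiftseq k u))"

definition eq_flat_output ::
  "((real^'n) \<times> (real^'m) \<Rightarrow> real^'m) \<Rightarrow>
   ((int \<Rightarrow> real^'m) \<Rightarrow> (int \<Rightarrow> real^'n) \<Rightarrow> (int \<Rightarrow> real^'m) \<Rightarrow> real^'m) \<Rightarrow>
   real^'n \<Rightarrow> real^'m \<Rightarrow> real^'m" where
  "eq_flat_output g \<phi> x0 u0 = \<phi> (\<lambda>_. g (x0, u0)) (\<lambda>_. x0) (\<lambda>_. u0)"

definition flat_around ::
  "((real^'n) \<times> (real^'m) \<Rightarrow> real^'n) \<Rightarrow> ((real^'n) \<times> (real^'m) \<Rightarrow> real^'m) \<Rightarrow>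
   real^'n \<Rightarrow> real^'m \<Rightarrow>
   ((int \<Rightarrow> real^'m) \<Rightarrow> (int \<Rightarrow> real^'n) \<Rightarrow> (int \<Rightarrow> real^'m) \<Rightarrow> real^'m) \<Rightarrow>
   ('m \<Rightarrow> nat) \<Rightarrow> ('m \<Rightarrow> nat) \<Rightarrow>
   ((int \<Rightarrow> real^'m) \<Rightarrow> real^'n) \<Rightarrow> ((int \<Rightarrow> real^'m) \<Rightarrow> real^'m) \<Rightarrow>
   ('m \<Rightarrow> nat) \<Rightarrow> ('m \<Rightarrow> nat) \<Rightarrow> bool" where
  "flat_around f g x0 u0 \<phi> Q1 Q2 Fx Fu R1 R2 \<longleftrightarrow>
     f (x0, u0) = x0 \<and>
     (\<forall>Z X U Z' X' U'.
        (\<forall>i j. - int (Q1 j) \<le> i \<and> i \<le> -1 \<longrightarrow> Z i $ j = Z' i $ j) \<and> X 0 = X' 0 \<and>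
        (\<forall>i j. 0 \<le> i \<and> i \<le> int (Q2 j) \<longrightarrow> U i $ j = U' i $ j)
        \<longrightarrow> \<phi> Z X U = \<phi> Z' X' U') \<and>
     depends_only_on Fx (\<lambda>i j. - int (R1 j) \<le> i \<and> i \<le> int (R2 j) - 1) \<and>
     depends_only_on Fu (\<lambda>i j. - int (R1 j) \<le> i \<and> i \<le> int (R2 j)) \<and>
     (\<exists>\<epsilon>>0. \<exists>\<delta>>0.
        seq_smooth_on Fx (seq_ball (eq_flat_output g \<phi> x0 u0) \<epsilon>) \<and>
        seq_smooth_on Fu (seq_ball (eq_flat_output g \<phi> x0 u0) \<epsilon>) \<and>
        (\<forall>Y\<in>seq_ball (eq_flat_output g \<phi> x0 u0) \<epsilon>.
           trajectory f (\<lambda>k. Fx (shiftseq k Y)) (\<lambda>k. Fu (shiftseq k Y)) \<and>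
           flat_output_seq g \<phi> (\<lambda>k. Fx (shiftseq k Y)) (\<lambda>k. Fu (shiftseq k Y)) = Y) \<and>
        (\<forall>x u. trajectory f x u \<and> (\<forall>k. dist (x k, u k) (x0, u0) < \<delta>) \<longrightarrow>
           flat_output_seq g \<phi> x u \<in> seq_ball (eq_flat_output g \<phi> x0 u0) \<epsilon> \<and>
           (\<forall>k. x k = Fx (shiftseq k (flat_output_seq g \<phi> x u)) \<and>
                u k = Fu (shiftseq k (flat_output_seq g \<phi> x u)))))"

definition seq_jacobian ::
  "((int \<Rightarrow> real^'m) \<Rightarrow> real^'k) \<Rightarrow> ('m \<Rightarrow> int) \<Rightarrow> (int \<Rightarrow> real^'m) \<Rightarrow> real^'m^'k" where
  "seq_jacobian F idx Y = (\<chi> a b. seq_partial F (idx b) b Y $ a)"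

text \<open>generic rank (around the constant sequence y0) of a matrix-valued function of y:
  the maximal rank attained on arbitrarily small neighbourhoods of y0\<close>
definition generic_rank :: "((int \<Rightarrow> real^'m) \<Rightarrow> real^'c^'r) \<Rightarrow> real^'m \<Rightarrow> nat" where
  "generic_rank M y0 = (LEAST r. \<exists>\<epsilon>>0. \<forall>Y\<in>seq_ball y0 \<epsilon>. rank (M Y) \<le> r)"

end

theory Submission
  imports Defs
begin

text \<open>Along every parameterized trajectory the state equation reads
  \<open>\<delta>(F_x) = f(F_x, F_u)\<close>. Differentiating it with respect to \<open>y_[R_2]\<close>, on which \<open>F_x\<close>
  itself does not depend, gives \<open>\<delta>(\<partial>_{y_[R_2-1]} F_x) = \<partial>_u f \<cdot> \<partial>_{y_[R_2]} F_u\<close>.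
  Since \<open>\<partial>_u f\<close> is injective (rank \<open>m\<close>), the two Jacobians have equal rank at every
  point of a neighbourhood of the equilibrium, up to a forward shift of the argument;
  these neighbourhoods are shift invariant, so the generic ranks coincide.\<close>

lemma linear_inj_iff_dim_range:
  fixes L :: "real^'m \<Rightarrow> real^'n"
  assumes "linear L"
  shows "inj L \<longleftrightarrow> dim (range L) = CARD('m)"
  using full_rank_injective [of "matrix L"] assms by (simp add: rank_dim_range matrix_works)

lemma rank_matrix_mul_left_inj:
  fixes L :: "real^'m \<Rightarrow> real^'n" and B :: "real^'p^'m"
  assumes "linear L" and "inj L"
  shows "rank (matrix L ** B) = rank B"
proof -
  have "rank (matrix L ** B) = dim (L ` range ((*v) B))"
    using assms(1)
    by (auto simp: rank_dim_range image_comp o_def matrix_vector_mul_assoc [symmetric] matrix_works)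
  also have "\<dots> = dim (range ((*v) B))"
    using assms by (intro dim_image_eq) (auto intro: inj_on_subset)
  finally show ?thesis
    by (simp add: rank_dim_range)
qed

lemma has_derivative_linear_snd:
  assumes "(f has_derivative f') F"
  shows "linear (\<lambda>v. f' (0, v))"
proof -
  have "bounded_linear (\<lambda>v. f' (0, v))"
    using has_derivative_bounded_linear [OF assms]
      bounded_linear_Pair [OF bounded_linear_zero bounded_linear_ident]
    by (rule bounded_linear_compose)
  then show ?thesis
    by (rule bounded_linear.linear)
qed

lemma norm_axis: "norm (axis j (a::real)) = \<bar>a\<bar>"
  by (simp add: norm_eq_sqrt_inner inner_axis_axis)

lemma shiftseq_in_seq_ball: "Y \<in> seq_ball c e \<Longrightarrow> shiftseq k Y \<in> seq_ball c e"
  by (simp add: seq_ball_def shiftseq_def)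

lemma seq_ball_mono: "e \<le> e' \<Longrightarrow> seq_ball c e \<subseteq> seq_ball c e'"
  by (auto simp: seq_ball_def intro: less_le_trans)

lemma seq_upd_self [simp]: "seq_upd Y i j (Y i $ j) = Y"
  by (auto simp: seq_upd_def fun_eq_iff vec_eq_iff)

lemma shiftseq_seq_upd: "shiftseq k (seq_upd Y i j t) = seq_upd (shiftseq k Y) (i - k) j t"
  by (auto simp: shiftseq_def seq_upd_def fun_eq_iff)

lemma depends_only_on_seq_upd:
  assumes "depends_only_on F W" and "\<not> W i j"
  shows "F (seq_upd Y i j t) = F Y"
proof -
  have "\<forall>i' j'. W i' j' \<longrightarrow> seq_upd Y i j t i' $ j' = Y i' $ j'"
    using assms(2) by (auto simp: seq_upd_def)
  then show ?thesis
    using assms(1) unfolding depends_only_on_def by blast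
qed

lemma eventually_seq_upd_in_seq_ball:
  assumes "Y \<in> seq_ball c e"
  shows "eventually (\<lambda>t. seq_upd Y i j t \<in> seq_ball c e) (nhds (Y i $ j))"
  unfolding eventually_nhds_metric
proof (intro exI conjI allI impI)
  show "0 < e - dist (Y i) c"
    using assms by (simp add: seq_ball_def)
  fix t assume t: "dist t (Y i $ j) < e - dist (Y i) c"
  have "seq_upd Y i j t i - Y i = axis j (t - Y i $ j)"
    by (auto simp: seq_upd_def axis_def vec_eq_iff)
  then have "dist (seq_upd Y i j t i) (Y i) = dist t (Y i $ j)"
    by (simp add: dist_norm norm_axis)
  then have "dist (seq_upd Y i j t i) c < e"
    using t dist_triangle[of "seq_upd Y i j t i" c "Y i"] by linarith
  then show "seq_upd Y i j t \<in> seq_ball c e"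
    using assms by (auto simp: seq_ball_def seq_upd_def)
qed

lemma seq_partial_cong_eventually:
  assumes "eventually (\<lambda>t. F (seq_upd Y i j t) = G (seq_upd Y i j t)) (nhds (Y i $ j))"
  shows "seq_partial F i j Y = seq_partial G i j Y"
  unfolding seq_partial_def using assms
  by (intro vector_derivative_cong_eq) (auto elim: eventually_mono)

lemma seq_partial_shiftseq:
  "seq_partial (\<lambda>Z. F (shiftseq k Z)) i j Y = seq_partial F (i - k) j (shiftseq k Y)"
  by (simp add: seq_partial_def shiftseq_seq_upd) (simp add: shiftseq_def)

lemma seq_partial_chain_pair_const:
  assumes "(\<lambda>t. K (seq_upd Y i j t)) differentiable (at (Y i $ j))"
    and "(f has_derivative f') (at (a, K Y))"
  shows "seq_partial (\<lambda>Z. f (a, K Z)) i j Y = f' (0, seq_partial K i j Y)"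
proof -
  have "((\<lambda>t. (a, K (seq_upd Y i j t))) has_vector_derivative (0, seq_partial K i j Y))
      (at (Y i $ j))"
    using assms(1) unfolding seq_partial_def
    by (intro has_vector_derivative_Pair has_vector_derivative_const)
      (rule vector_derivative_works [THEN iffD1])
  from vector_derivative_diff_chain_within [OF this, of f f'] assms(2)
  have "((\<lambda>t. f (a, K (seq_upd Y i j t))) has_vector_derivative f' (0, seq_partial K i j Y))
      (at (Y i $ j))"
    by (simp add: o_def has_derivative_at_withinI)
  then show ?thesis
    unfolding seq_partial_def [of "\<lambda>Z. f (a, K Z)"] by (rule vector_derivative_at)
qed

lemma generic_rank_eq_shift:
  fixes M :: "(int \<Rightarrow> real^'m) \<Rightarrow> real^'c^'r" and N :: "(int \<Rightarrow> real^'m) \<Rightarrow> real^'d^'s"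
  assumes "e > 0" and "\<And>Y. Y \<in> seq_ball c e \<Longrightarrow> rank (M (shiftseq k Y)) = rank (N Y)"
  shows "generic_rank M c = generic_rank N c"
proof -
  have shift_ball_eq: "shiftseq k ` seq_ball c e' = seq_ball c e'" for e'
  proof
    show "shiftseq k ` seq_ball c e' \<subseteq> seq_ball c e'"
      by (auto intro: shiftseq_in_seq_ball)
    show "seq_ball c e' \<subseteq> shiftseq k ` seq_ball c e'"
    proof
      fix Y assume "Y \<in> seq_ball c e'"
      moreover have "Y = shiftseq k (shiftseq (- k) Y)"
        by (simp add: shiftseq_def)
      ultimately show "Y \<in> shiftseq k ` seq_ball c e'"
        by (blast intro: shiftseq_in_seq_ball)
    qed
  qed
  have "(\<forall>Y\<in>seq_ball c e'. rank (M Y) \<le> r) \<longleftrightarrow> (\<forall>Y\<in>seq_ball c e'. rank (N Y) \<le> r)"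
    if e': "e' \<le> e" for e' r
  proof -
    have "(\<forall>Y\<in>seq_ball c e'. rank (M Y) \<le> r) \<longleftrightarrow>
        (\<forall>Y\<in>shiftseq k ` seq_ball c e'. rank (M Y) \<le> r)"
      by (simp only: shift_ball_eq)
    also have "\<dots> \<longleftrightarrow> (\<forall>Y\<in>seq_ball c e'. rank (N Y) \<le> r)"
    proof -
      have "rank (M (shiftseq k Y)) = rank (N Y)" if "Y \<in> seq_ball c e'" for Y
        using assms(2) seq_ball_mono [OF e'] that by blast
      then show ?thesis
        by simp
    qed
    finally show ?thesis .
  qed
  moreover have "(\<exists>e'>0. \<forall>Y\<in>seq_ball c e'. P Y) \<longleftrightarrow>
      (\<exists>e'>0. e' \<le> e \<and> (\<forall>Y\<in>seq_ball c e'. P Y))" for P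
    using assms(1) seq_ball_mono [of "min _ e" _ c]
    by (metis min.cobounded1 min.cobounded2 min_less_iff_conj subsetD)
  ultimately show ?thesis
    unfolding generic_rank_def by (simp cong: conj_cong)
qed

lemma seq_partial_shifted_state:
  assumes shift: "\<And>Z. Z \<in> seq_ball c e \<Longrightarrow> fwd_shift Fx Z = f (Fx Z, Fu Z)"
    and dep: "depends_only_on Fx W" and "\<not> W i j"
    and Y: "Y \<in> seq_ball c e"
    and "(\<lambda>t. Fu (seq_upd Y i j t)) differentiable (at (Y i $ j))"
    and "(f has_derivative f') (at (Fx Y, Fu Y))"
  shows "seq_partial Fx (i - 1) j (shiftseq 1 Y) = f' (0, seq_partial Fu i j Y)"
proof -
  have "seq_partial Fx (i - 1) j (shiftseq 1 Y) = seq_partial (fwd_shift Fx) i j Y"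
    by (simp add: fwd_shift_def seq_partial_shiftseq)
  also have "\<dots> = seq_partial (\<lambda>Z. f (Fx Z, Fu Z)) i j Y"
    by (intro seq_partial_cong_eventually eventually_mono [OF eventually_seq_upd_in_seq_ball [OF Y]])
      (simp add: shift)
  also have "\<dots> = seq_partial (\<lambda>Z. f (Fx Y, Fu Z)) i j Y"
    using depends_only_on_seq_upd [OF dep \<open>\<not> W i j\<close>] by (intro seq_partial_cong_eventually) simp
  also have "\<dots> = f' (0, seq_partial Fu i j Y)"
    by (rule seq_partial_chain_pair_const) fact+
  finally show ?thesis .
qed

lemma seq_jacobian_shifted_state:
  fixes f :: "(real^'n) \<times> (real^'m) \<Rightarrow> real^'n"
    and Fx :: "(int \<Rightarrow> real^'m) \<Rightarrow> real^'n" and Fu :: "(int \<Rightarrow> real^'m) \<Rightarrow> real^'m"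
  assumes shift: "\<And>Z. Z \<in> seq_ball c e \<Longrightarrow> fwd_shift Fx Z = f (Fx Z, Fu Z)"
    and dep: "depends_only_on Fx W" and indep: "\<And>j. \<not> W (idx j) j"
    and Y: "Y \<in> seq_ball c e"
    and diff: "\<And>j. (\<lambda>t. Fu (seq_upd Y (idx j) j t)) differentiable (at (Y (idx j) $ j))"
    and f': "(f has_derivative f') (at (Fx Y, Fu Y))"
  shows "seq_jacobian Fx (\<lambda>j. idx j - 1) (shiftseq 1 Y) =
    matrix (\<lambda>v. f' (0, v)) ** seq_jacobian Fu idx Y"
proof -
  have "linear (\<lambda>v. f' (0, v))"
    using f' by (rule has_derivative_linear_snd)
  then have "column j (matrix (\<lambda>v. f' (0, v)) ** seq_jacobian Fu idx Y) =
      f' (0, seq_partial Fu (idx j) j Y)" for j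
    by (simp add: matrix_vector_mult_basis [symmetric] matrix_vector_mul_assoc [symmetric] matrix_works)
      (simp add: matrix_vector_mult_basis column_def seq_jacobian_def vec_eq_iff)
  moreover have "column j (seq_jacobian Fx (\<lambda>j. idx j - 1) (shiftseq 1 Y)) =
      seq_partial Fx (idx j - 1) j (shiftseq 1 Y)" for j
    by (simp add: column_def seq_jacobian_def vec_eq_iff)
  ultimately show ?thesis
    using seq_partial_shifted_state [OF shift dep indep Y diff f']
    by (simp add: column_def vec_eq_iff)
qed

lemma trajectory_fwd_shift:
  assumes "trajectory f (\<lambda>k. Fx (shiftseq k Y)) (\<lambda>k. Fu (shiftseq k Y))"
  shows "fwd_shift Fx Y = f (Fx Y, Fu Y)"
  using assms [unfolded trajectory_def, rule_format, of 0] by (simp add: fwd_shift_def shiftseq_def)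

lemma standing_assumptions_derivative:
  fixes f :: "(real^'n) \<times> (real^'m) \<Rightarrow> real^'n" and g :: "(real^'n) \<times> (real^'m) \<Rightarrow> real^'m"
  assumes "standing_assumptions f g"
  obtains f' where "\<And>p. (f has_derivative f' p) (at p)" and "\<And>p. inj (\<lambda>v. f' p (0, v))"
proof -
  have "Ck_on (Suc 0) f UNIV"
    using assms unfolding standing_assumptions_def smooth_on_def by blast
  then obtain f' where f': "\<And>p. (f has_derivative f' p) (at p)"
    by auto
  moreover have "inj (\<lambda>v. f' p (0, v))" for p
  proof -
    have "dim (range (\<lambda>v. f' p (0, v))) = CARD('m)"
      using assms f' unfolding standing_assumptions_def by blast
    then show ?thesis
      using linear_inj_iff_dim_range [OF has_derivative_linear_snd [OF f']] by simp
  qed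
  ultimately show ?thesis
    using that by blast
qed

theorem proposition1:
  fixes f :: "(real^'n) \<times> (real^'m) \<Rightarrow> real^'n"
    and g :: "(real^'n) \<times> (real^'m) \<Rightarrow> real^'m"
    and x0 :: "real^'n" and u0 :: "real^'m"
    and \<phi> :: "(int \<Rightarrow> real^'m) \<Rightarrow> (int \<Rightarrow> real^'n) \<Rightarrow> (int \<Rightarrow> real^'m) \<Rightarrow> real^'m"
    and Q1 Q2 R1 R2 :: "'m \<Rightarrow> nat"
    and Fx :: "(int \<Rightarrow> real^'m) \<Rightarrow> real^'n"
    and Fu :: "(int \<Rightarrow> real^'m) \<Rightarrow> real^'m"
  assumes "standing_assumptions f g"
    and "flat_around f g x0 u0 \<phi> Q1 Q2 Fx Fu R1 R2"
  shows "generic_rank (seq_jacobian Fx (\<lambda>j. int (R2 j) - 1)) (eq_flat_output g \<phi> x0 u0)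
       = generic_rank (seq_jacobian Fu (\<lambda>j. int (R2 j))) (eq_flat_output g \<phi> x0 u0)"
proof -
  let ?B = "seq_ball (eq_flat_output g \<phi> x0 u0)"
  obtain \<epsilon> where "\<epsilon> > 0" and smooth: "seq_smooth_on Fu (?B \<epsilon>)"
    and traj: "\<forall>Y\<in>?B \<epsilon>. trajectory f (\<lambda>k. Fx (shiftseq k Y)) (\<lambda>k. Fu (shiftseq k Y))"
    and dep: "depends_only_on Fx (\<lambda>i j. - int (R1 j) \<le> i \<and> i \<le> int (R2 j) - 1)"
    using assms(2) unfolding flat_around_def by blast
  obtain f' where f': "\<And>p. (f has_derivative f' p) (at p)" and inj: "\<And>p. inj (\<lambda>v. f' p (0, v))"
    using standing_assumptions_derivative [OF assms(1)] by blast
  have shift: "fwd_shift Fx Y = f (Fx Y, Fu Y)" if "Y \<in> ?B \<epsilon>" for Y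
    using traj that by (blast intro: trajectory_fwd_shift)
  have diff: "(\<lambda>t. Fu (seq_upd Y i j t)) differentiable (at (Y i $ j))" if "Y \<in> ?B \<epsilon>" for Y i j
    using smooth that unfolding seq_smooth_on_def by (metis seq_Ck_on.simps(2))
  have "rank (seq_jacobian Fx (\<lambda>j. int (R2 j) - 1) (shiftseq 1 Y)) =
      rank (seq_jacobian Fu (\<lambda>j. int (R2 j)) Y)" if "Y \<in> ?B \<epsilon>" for Y
    using seq_jacobian_shifted_state
        [where idx = "\<lambda>j. int (R2 j)", OF shift dep _ that diff [OF that] f']
      rank_matrix_mul_left_inj [OF has_derivative_linear_snd [OF f'] inj]
    by simp
  with \<open>\<epsilon> > 0\<close> show ?thesis
    by (rule generic_rank_eq_shift)
qed

end
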